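(* Let $P,Q,R_0,R_1$ be integers with $P>0$, $Q<0$, $R_0,R_1$ positive integers, and $\gcd(P,Q)=\gcd(R_1,Q)=1$. Let $(R_n)_{n\ge0}$ be given by $R_{n+2}=PR_{n+1}-QR_n$ ($n\ge0$), and let $\alpha,\beta$ be the roots of $x^2-Px+Q$ with $|\alpha|\ge|\beta|$ (here $\alpha>0>\beta$). Then for all positive integers $n,m$ with $n\geq 2$ and $m\leq \lfloor (n+1)/2\rfloor+1$, \[\mathrm{lcm}(R_m,R_{m+1},\dots,R_n)\geq \gcd(R_0,R_1)\left(\frac{R_1+R_0|\beta|}{\gcd(R_0,R_1)}\right)^{\frac{n-1}{2}}\alpha^{\frac{n^2}{4}-\frac{n}{2}-\frac{7}{4}}.\] *)

theory Defs
  imports "HOL-Analysis.Analysis"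
begin

end

theory Submission
  imports Defs
begin

text \<open>
  Let \<open>g = gcd R(0) R(1)\<close> and let \<open>U\<close> be the Lucas sequence of \<open>(P, Q)\<close>. Since
  \<open>R(x + j) = U(j) R(x + 1) - Q U(j - 1) R(x)\<close> and all consecutive terms have gcd \<open>g\<close>
  (each \<open>R(x + 1)\<close> is prime to \<open>Q\<close>), \<open>gcd R(x) R(x + j)\<close> divides \<open>g U(j)\<close>. Hence the product
  of \<open>k + 1\<close> consecutive terms divides their lcm times \<open>g\<^sup>k U(1) \<cdots> U(k)\<close>. As \<open>\<beta> < 0\<close>, we have
  \<open>U(j + 1) \<le> \<alpha>\<^sup>j\<close> and \<open>R(j + 2) \<ge> \<alpha>\<^sup>j (R(1) - \<beta> R(0))\<close>, so every quotient \<open>R(y + 2 + j) / U(j)\<close>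
  is at least \<open>\<alpha>\<^bsup>y + 1\<^esup> (R(1) - \<beta> R(0))\<close>. The window from \<open>\<lfloor>(n + 1) / 2\<rfloor> + 1\<close> to \<open>n\<close>
  gives the stated exponents.
\<close>

fun lucas_U :: "int \<Rightarrow> int \<Rightarrow> nat \<Rightarrow> int" where
  "lucas_U P Q 0 = 0"
| "lucas_U P Q (Suc 0) = 1"
| "lucas_U P Q (Suc (Suc k)) = P * lucas_U P Q (Suc k) - Q * lucas_U P Q k"

locale lucas_recurrence =
  fixes P Q :: int and R :: "nat \<Rightarrow> int"
  assumes rec: "R (k + 2) = P * R (k + 1) - Q * R k"

interpretation lucas_U: lucas_recurrence P Q "lucas_U P Q" for P Q
  by unfold_locales (simp add: numeral_2_eq_2)

context lucas_recurrence
begin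

lemma eq_if_initial_eq:
  assumes "lucas_recurrence P Q S" and "S 0 = R 0" and "S 1 = R 1"
  shows "S k = R k"
proof -
  have "S k = R k \<and> S (k + 1) = R (k + 1)"
    using assms rec lucas_recurrence.rec[OF assms(1)]
    by (induction k) (simp_all add: numeral_2_eq_2)
  then show ?thesis ..
qed

lemma addition_formula:
  "R (x + k + 1) = lucas_U P Q (k + 1) * R (x + 1) - Q * lucas_U P Q k * R x"
proof -
  interpret shifted: lucas_recurrence P Q "\<lambda>k. R (x + k + 1)"
    by unfold_locales (use rec[of "x + k + 1" for k] in \<open>simp add: algebra_simps\<close>)
  have "lucas_recurrence P Q
      (\<lambda>k. lucas_U P Q (k + 1) * R (x + 1) - Q * lucas_U P Q k * R x)"
    by unfold_locales (simp add: lucas_U.rec[of P Q "k + 1" for k] lucas_U.rec algebra_simps)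
  from shifted.eq_if_initial_eq[OF this] show ?thesis
    using rec[of x] by (simp add: add.commute)
qed

context
  assumes P_pos: "P > 0" and Q_neg: "Q < 0" and R0_nonneg: "R 0 \<ge> 0" and R1_pos: "R 1 > 0"
begin

lemma nonneg: "R k \<ge> 0" and Suc_pos: "R (Suc k) > 0"
proof -
  have "R k \<ge> 0 \<and> R (Suc k) > 0"
  proof (induction k)
    case (Suc k)
    then have "P * R (Suc k) > 0" and "Q * R k \<le> 0"
      using P_pos Q_neg by (simp_all add: mult_nonpos_nonneg)
    then show ?case
      using rec[of k] Suc by (simp add: numeral_2_eq_2)
  qed (use R0_nonneg R1_pos in simp)
  then show "R k \<ge> 0" and "R (Suc k) > 0" by auto
qed

end

context
  fixes a b :: real
  assumes sum_roots: "of_int P = a + b" and prod_roots: "of_int Q = a * b"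
begin

lemma first_order_reduction:
  "of_int (R (k + 1)) - b * of_int (R k) = a ^ k * (of_int (R 1) - b * of_int (R 0))"
proof (induction k)
  case (Suc k)
  have "of_int (R (k + 2)) = (a + b) * of_int (R (k + 1)) - a * b * of_int (R k)"
    using rec[of k] by (simp flip: sum_roots prod_roots)
  then have "of_int (R (Suc k + 1)) - b * of_int (R (Suc k))
      = a * (of_int (R (k + 1)) - b * of_int (R k))"
    by (simp add: algebra_simps)
  then show ?case using Suc by simp
qed simp

context
  assumes P_pos: "P > 0" and Q_neg: "Q < 0" and R0_nonneg: "R 0 \<ge> 0" and R1_pos: "R 1 > 0"
    and b_nonpos: "b \<le> 0"
begin

lemma upper_bound: "of_int (R (k + 1)) \<le> a ^ k * (of_int (R 1) - b * of_int (R 0))"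
proof -
  have "b * of_int (R k) \<le> 0"
    using b_nonpos nonneg[OF P_pos Q_neg R0_nonneg R1_pos] by (simp add: mult_nonpos_nonneg)
  then show ?thesis using first_order_reduction[of k] by linarith
qed

lemma larger_root_ge_1: "a \<ge> 1"
  using sum_roots P_pos b_nonpos by linarith

lemma initial_combination_nonneg: "of_int (R 1) - b * of_int (R 0) \<ge> 0"
proof -
  have "b * of_int (R 0) \<le> 0"
    using b_nonpos R0_nonneg by (simp add: mult_nonpos_nonneg)
  then show ?thesis using R1_pos by simp
qed

lemma lower_bound: "a ^ k * (of_int (R 1) - b * of_int (R 0)) \<le> of_int (R (k + 2))"
proof -
  define c where "c = of_int (R 1) - b * of_int (R 0)"
  have "a ^ k * c \<ge> 0"
    using larger_root_ge_1 initial_combination_nonneg by (simp add: c_def)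
  then have "a ^ k * c \<le> a ^ k * c * (a + b)"
    using mult_left_mono[of 1 "a + b" "a ^ k * c"] sum_roots P_pos by simp
  also have "\<dots> = a ^ (k + 1) * c + b * (a ^ k * c)"
    by (simp add: algebra_simps)
  also have "\<dots> \<le> a ^ (k + 1) * c + b * of_int (R (k + 1))"
    using mult_left_mono_neg[OF upper_bound[of k, folded c_def] b_nonpos] by simp
  also have "\<dots> = of_int (R (k + 2))"
    using first_order_reduction[of "k + 1"] by (simp add: c_def add.assoc)
  finally show ?thesis unfolding c_def .
qed

lemma window_prod_lower_bound:
  "(of_int (R 1) - b * of_int (R 0)) * a ^ y
     * ((of_int (R 1) - b * of_int (R 0)) * a ^ (y + 1)) ^ k
     * (\<Prod>j=1..k. of_int (lucas_U P Q j))
   \<le> (\<Prod>i\<le>k. of_int (R (y + 2 + i)))"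
proof -
  define c where "c = of_int (R 1) - b * of_int (R 0)"
  have factor_nonneg: "c * a ^ (y + 1) * of_int (lucas_U P Q j) \<ge> 0" for j
    using initial_combination_nonneg larger_root_ge_1 lucas_U.nonneg[OF P_pos Q_neg]
    by (simp add: c_def)
  have factor_bound: "c * a ^ (y + 1) * of_int (lucas_U P Q j) \<le> of_int (R (y + 2 + j))"
    if "j \<ge> 1" for j
  proof -
    obtain i where j: "j = i + 1" using \<open>j \<ge> 1\<close> by (metis add.commute le_Suc_ex)
    have "of_int (lucas_U P Q (i + 1)) \<le> a ^ i"
      using lucas_U.upper_bound[OF sum_roots prod_roots P_pos Q_neg _ _ b_nonpos] by simp
    moreover have "c * a ^ (y + 1) \<ge> 0"
      using initial_combination_nonneg larger_root_ge_1 by (simp add: c_def)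
    ultimately have "c * a ^ (y + 1) * of_int (lucas_U P Q j) \<le> c * a ^ (y + 1) * a ^ i"
      unfolding j by (rule mult_left_mono)
    also have "\<dots> = a ^ (y + j) * c"
      by (simp add: j power_add algebra_simps)
    also have "\<dots> \<le> of_int (R (y + 2 + j))"
      using lower_bound[of "y + j", folded c_def] by (simp add: add_ac)
    finally show ?thesis .
  qed
  have "c * a ^ y * (c * a ^ (y + 1)) ^ k * (\<Prod>j=1..k. of_int (lucas_U P Q j))
      = c * a ^ y * (\<Prod>j=1..k. c * a ^ (y + 1) * of_int (lucas_U P Q j))"
    by (simp add: prod.distrib)
  also have "\<dots> \<le> of_int (R (y + 2)) * (\<Prod>j=1..k. of_int (R (y + 2 + j)))"
  proof (rule mult_mono)
    show "c * a ^ y \<le> of_int (R (y + 2))"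
      using lower_bound[of y] by (simp add: c_def mult.commute)
    show "(\<Prod>j=1..k. c * a ^ (y + 1) * of_int (lucas_U P Q j))
        \<le> (\<Prod>j=1..k. of_int (R (y + 2 + j)))"
      using factor_nonneg factor_bound by (intro prod_mono) simp
    show "0 \<le> (of_int (R (y + 2)) :: real)"
      using nonneg[OF P_pos Q_neg R0_nonneg R1_pos] by simp
    show "0 \<le> (\<Prod>j=1..k. c * a ^ (y + 1) * of_int (lucas_U P Q j))"
      using factor_nonneg by (simp add: prod_nonneg)
  qed
  also have "\<dots> = (\<Prod>i\<le>k. of_int (R (y + 2 + i)))"
    by (simp add: atMost_atLeast0 prod.atLeast_Suc_atMost)
  finally show ?thesis unfolding c_def .
qed

end

end

context
  assumes coprime_P_Q: "coprime P Q" and coprime_R1_Q: "coprime (R 1) Q"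
begin

lemma coprime_Suc_Q: "coprime (R (Suc k)) Q"
proof (induction k)
  case (Suc k)
  have "gcd Q (R (Suc (Suc k))) = gcd Q (P * R (Suc k))"
    using rec[of k] gcd_add_mult[of Q "- R k" "P * R (Suc k)"]
    by (simp add: numeral_2_eq_2 mult.commute[of Q])
  then have "coprime (R (Suc (Suc k))) Q \<longleftrightarrow> coprime (P * R (Suc k)) Q"
    by (simp add: coprime_iff_gcd_eq_1 gcd.commute)
  moreover have "coprime (P * R (Suc k)) Q" using Suc coprime_P_Q by simp
  ultimately show ?case by simp
qed (use coprime_R1_Q in simp)

lemma gcd_Suc_eq: "gcd (R k) (R (Suc k)) = gcd (R 0) (R 1)"
proof (induction k)
  case (Suc k)
  have "gcd (R (Suc k)) (R (Suc (Suc k))) = gcd (R (Suc k)) (- Q * R k)"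
    using rec[of k] gcd_add_mult[of "R (Suc k)" P "- Q * R k"] by (simp add: numeral_2_eq_2)
  also have "\<dots> = gcd (R (Suc k)) (R k)"
    using gcd_mult_right_left_cancel[OF coprime_Suc_Q] by simp
  finally show ?case using Suc by (simp add: gcd.commute)
qed simp

lemma gcd_dvd_gcd_mult_U:
  "gcd (R x) (R (x + k + 1)) dvd gcd (R 0) (R 1) * lucas_U P Q (k + 1)"
proof -
  let ?d = "gcd (R x) (R (x + k + 1))"
  let ?u = "lucas_U P Q (k + 1)"
  have "?u * R (x + 1) = R (x + k + 1) + Q * lucas_U P Q k * R x"
    using addition_formula[of x k] by simp
  moreover have "?d dvd R (x + k + 1) + Q * lucas_U P Q k * R x" by simp
  ultimately have "?d dvd ?u * R (x + 1)" by (simp only:)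
  moreover have "?d dvd ?u * R x" by simp
  ultimately have "?d dvd gcd (?u * R x) (?u * R (x + 1))" by simp
  also have "\<dots> = normalize (?u * gcd (R 0) (R 1))"
    using gcd_Suc_eq[of x] by (simp add: gcd_mult_left)
  finally show ?thesis by (simp add: mult.commute)
qed

text \<open>Dropping the last, respectively the first, factor leaves a product dividing the bound for the
  shorter window; so the whole product divides that bound times the gcd of the two dropped factors.\<close>
lemma window_prod_dvd:
  assumes "\<And>i. i \<le> k \<Longrightarrow> R (x + i) dvd z"
  shows "(\<Prod>i\<le>k. R (x + i)) dvd z * gcd (R 0) (R 1) ^ k * (\<Prod>j=1..k. lucas_U P Q j)"
  using assms
proof (induction k arbitrary: x)
  case (Suc k)
  define C where "C = z * gcd (R 0) (R 1) ^ k * (\<Prod>j=1..k. lucas_U P Q j)"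
  have "(\<Prod>i\<le>Suc k. R (x + i)) = (\<Prod>i\<le>k. R (x + i)) * R (x + k + 1)"
    by simp
  then have last: "(\<Prod>i\<le>Suc k. R (x + i)) dvd C * R (x + k + 1)"
    using Suc.IH[of x] Suc.prems unfolding C_def by (simp add: mult_dvd_mono)
  have "(\<Prod>i\<le>k. R (Suc x + i)) dvd C"
    using Suc.IH[of "Suc x"] Suc.prems[of "Suc i" for i] unfolding C_def by simp
  moreover have "(\<Prod>i\<le>Suc k. R (x + i)) = (\<Prod>i\<le>k. R (Suc x + i)) * R x"
    by (simp add: prod.atMost_Suc_shift mult.commute del: prod.atMost_Suc)
  ultimately have first: "(\<Prod>i\<le>Suc k. R (x + i)) dvd C * R x"
    by (simp add: mult_dvd_mono)
  have "(\<Prod>i\<le>Suc k. R (x + i)) dvd gcd (C * R x) (C * R (x + k + 1))"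
    using first last by simp
  also have "\<dots> = normalize (C * gcd (R x) (R (x + k + 1)))"
    by (rule gcd_mult_left)
  also have "\<dots> dvd C * (gcd (R 0) (R 1) * lucas_U P Q (k + 1))"
    using gcd_dvd_gcd_mult_U by (simp add: mult_dvd_mono)
  also have "\<dots> = z * gcd (R 0) (R 1) ^ Suc k * (\<Prod>j=1..Suc k. lucas_U P Q j)"
    unfolding C_def by (simp add: prod.nat_ivl_Suc' algebra_simps)
  finally show ?case .
qed simp

end

lemma Lcm_pos:
  assumes "P > 0" "Q < 0" "R 0 \<ge> 0" "R 1 > 0" and "i \<ge> 1"
  shows "Lcm (R ` {i..j}) > 0"
proof -
  have "R l \<noteq> 0" if "l \<in> {i..j}" for l
    using Suc_pos[OF assms(1-4), of "l - 1"] that \<open>i \<ge> 1\<close> by simp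
  then have "Lcm (R ` {i..j}) \<noteq> 0"
    by (auto simp: Lcm_0_iff)
  then show ?thesis by (simp add: order_le_neq_trans)
qed

lemma Lcm_le_Lcm_of_le:
  assumes "P > 0" "Q < 0" "R 0 \<ge> 0" "R 1 > 0" and "1 \<le> m" "m \<le> i"
  shows "Lcm (R ` {i..j}) \<le> Lcm (R ` {m..j})"
  using Lcm_pos[OF assms(1-5)] \<open>m \<le> i\<close> by (intro zdvd_imp_le Lcm_subset image_mono) auto

lemma Lcm_window_lower_bound:
  fixes a b :: real
  assumes sum_roots: "of_int P = a + b" and prod_roots: "of_int Q = a * b"
    and pos: "P > 0" "Q < 0" "R 0 \<ge> 0" "R 1 > 0" and b_nonpos: "b \<le> 0"
    and coprime: "coprime P Q" "coprime (R 1) Q"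
  shows "(of_int (R 1) - b * of_int (R 0)) ^ (k + 1) * a ^ ((k + 1) * y + k)
    \<le> of_int (Lcm (R ` {y + 2..y + 2 + k})) * of_int (gcd (R 0) (R 1)) ^ k"
proof -
  define c where "c = of_int (R 1) - b * of_int (R 0)"
  define z where "z = Lcm (R ` {y + 2..y + 2 + k})"
  define g where "g = gcd (R 0) (R 1)"
  define U where "U = (\<Prod>j=1..k. lucas_U P Q j)"
  have "z > 0" using Lcm_pos[OF pos] by (simp add: z_def)
  moreover have "g > 0" using pos by (simp add: g_def)
  moreover have "U > 0"
    unfolding U_def
  proof (rule prod_pos)
    show "lucas_U P Q j > 0" if "j \<in> {1..k}" for j
      using lucas_U.Suc_pos[OF pos(1,2), of "j - 1"] that by simp
  qed
  ultimately have "z * g ^ k * U > 0" by simp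
  moreover have "(\<Prod>i\<le>k. R (y + 2 + i)) dvd z * g ^ k * U"
    unfolding z_def g_def U_def by (rule window_prod_dvd[OF coprime]) simp
  ultimately have "(\<Prod>i\<le>k. R (y + 2 + i)) \<le> z * g ^ k * U"
    by (rule zdvd_imp_le[rotated])
  then have "(\<Prod>i\<le>k. of_int (R (y + 2 + i))) \<le> of_int z * of_int g ^ k * (of_int U :: real)"
    by (metis of_int_le_iff of_int_mult of_int_power of_int_prod)
  with window_prod_lower_bound[OF sum_roots prod_roots pos b_nonpos, of y k]
  have "c * a ^ y * (c * a ^ (y + 1)) ^ k * of_int U \<le> of_int z * of_int g ^ k * of_int U"
    unfolding c_def U_def by simp
  then have "c * a ^ y * (c * a ^ (y + 1)) ^ k \<le> of_int z * of_int g ^ k"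
    using \<open>U > 0\<close> by simp
  moreover have "c ^ (k + 1) * a ^ ((k + 1) * y + k) = c * a ^ y * (c * a ^ (y + 1)) ^ k"
    by (simp add: power_mult_distrib power_add mult.commute[of y k] flip: power_mult)
  ultimately show ?thesis unfolding c_def z_def g_def by (simp only:)
qed

end

lemma distinct_roots_vieta:
  fixes p q x y :: "'a :: idom"
  assumes "x\<^sup>2 - p * x + q = 0" and "y\<^sup>2 - p * y + q = 0" and "x \<noteq> y"
  shows "p = x + y" and "q = x * y"
proof -
  have "(x - y) * (x + y - p) = (x\<^sup>2 - p * x + q) - (y\<^sup>2 - p * y + q)"
    by (simp add: algebra_simps power2_eq_square)
  also have "\<dots> = 0" using assms(1,2) by simp
  finally have "(x - y) * (x + y - p) = 0" .
  then show "p = x + y" using \<open>x \<noteq> y\<close> by simp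
  then show "q = x * y"
    using assms(1) by (simp add: algebra_simps power2_eq_square)
qed

lemma real_roots_of_negative_Q:
  fixes \<alpha> \<beta> :: real
  assumes "P > 0" and "Q < 0"
    and "\<alpha>\<^sup>2 - of_int P * \<alpha> + of_int Q = 0" and "\<beta>\<^sup>2 - of_int P * \<beta> + of_int Q = 0"
    and "\<alpha> \<noteq> \<beta>" and "\<bar>\<alpha>\<bar> \<ge> \<bar>\<beta>\<bar>"
  shows "of_int P = \<alpha> + \<beta>" and "of_int Q = \<alpha> * \<beta>" and "\<beta> < 0"
proof -
  show sum: "of_int P = \<alpha> + \<beta>" and prod: "of_int Q = \<alpha> * \<beta>"
    using distinct_roots_vieta assms(3-5) by blast+
  have "\<alpha> * \<beta> < 0" using prod \<open>Q < 0\<close> by simp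
  then show "\<beta> < 0" using sum \<open>P > 0\<close> \<open>\<bar>\<alpha>\<bar> \<ge> \<bar>\<beta>\<bar>\<close> by (auto simp: mult_less_0_iff)
qed

lemma window_choice:
  assumes "n \<ge> 2"
  obtains y k :: nat where "n = y + 2 + k" and "y + 2 = (n + 1) div 2 + 1"
    and "(real n - 1) / 2 \<le> real (k + 1)"
    and "(real n)\<^sup>2 / 4 - real n / 2 - 7 / 4 \<le> real ((k + 1) * y + k)"
proof -
  define K where "K = (n - 2) div 2"
  have "n = 2 * K + 2 \<or> n = 2 * K + 3"
    using assms unfolding K_def by presburger
  then show ?thesis
  proof
    assume "n = 2 * K + 2"
    then show ?thesis
      by (intro that[of K K]) (simp_all add: power2_eq_square algebra_simps)
  next
    assume "n = 2 * K + 3"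
    then show ?thesis
      by (intro that[of "K + 1" K]) (simp_all add: power2_eq_square algebra_simps)
  qed
qed

lemma powr_le_power:
  fixes x e :: real
  assumes "x \<ge> 1" and "e \<le> real n"
  shows "x powr e \<le> x ^ n"
  using powr_mono[OF assms(2,1)] assms(1) by (simp add: powr_realpow)

lemma powr_bound_of_power_bound:
  fixes g c a L e\<^sub>1 e\<^sub>2 :: real
  assumes "g > 0" and "c \<ge> g" and "a \<ge> 1" and "e\<^sub>1 \<le> real (k + 1)" and "e\<^sub>2 \<le> real E"
    and "c ^ (k + 1) * a ^ E \<le> L * g ^ k"
  shows "g * (c / g) powr e\<^sub>1 * a powr e\<^sub>2 \<le> L"
proof -
  have "g * (c / g) powr e\<^sub>1 * a powr e\<^sub>2 \<le> g * (c / g) ^ (k + 1) * a ^ E"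
    using assms(1-5) by (intro mult_mono mult_left_mono powr_le_power) auto
  also have "\<dots> = c ^ (k + 1) * a ^ E / g ^ k"
    using \<open>g > 0\<close> by (simp add: power_divide field_simps)
  also have "\<dots> \<le> L"
    using assms(1,6) by (simp add: pos_divide_le_eq)
  finally show ?thesis .
qed

theorem theorem3:
  fixes P Q :: int and R :: "nat \<Rightarrow> int" and \<alpha> \<beta> :: real and n m :: nat
  assumes "P > 0" and "Q < 0" and "R 0 > 0" and "R 1 > 0"
    and "gcd P Q = 1" and "gcd (R 1) Q = 1"
    and rec: "\<And>k. R (k + 2) = P * R (k + 1) - Q * R k"
    and "\<alpha>\<^sup>2 - of_int P * \<alpha> + of_int Q = 0"
    and "\<beta>\<^sup>2 - of_int P * \<beta> + of_int Q = 0"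
    and "\<alpha> \<noteq> \<beta>" and "\<bar>\<alpha>\<bar> \<ge> \<bar>\<beta>\<bar>"
    and "n \<ge> 2" and "m \<ge> 1" and "m \<le> (n + 1) div 2 + 1"
  shows "real_of_int (Lcm (R ` {m..n})) \<ge>
    of_int (gcd (R 0) (R 1))
    * ((of_int (R 1) + of_int (R 0) * \<bar>\<beta>\<bar>) / of_int (gcd (R 0) (R 1))) powr ((real n - 1) / 2)
    * \<alpha> powr ((real n)\<^sup>2 / 4 - real n / 2 - 7 / 4)"
proof -
  interpret lucas_recurrence P Q R
    by unfold_locales (rule rec)
  have sum: "of_int P = \<alpha> + \<beta>" and prod: "of_int Q = \<alpha> * \<beta>" and "\<beta> < 0"
    using real_roots_of_negative_Q assms(1,2,8-11) by blast+
  then have "\<alpha> \<ge> 1" using sum assms(1) by linarith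
  define g where "g = gcd (R 0) (R 1)"
  define c where "c = of_int (R 1) + of_int (R 0) * \<bar>\<beta>\<bar>"
  have c_eq: "c = of_int (R 1) - \<beta> * of_int (R 0)"
    using \<open>\<beta> < 0\<close> by (simp add: c_def)
  have "g > 0" using assms(4) by (simp add: g_def)
  have "g \<le> R 1" using assms(4) by (simp add: g_def zdvd_imp_le)
  then have "of_int g \<le> c" using assms(3) by (simp add: c_def add_increasing2)
  obtain y k where n: "n = y + 2 + k" and start: "y + 2 = (n + 1) div 2 + 1"
    and exps: "(real n - 1) / 2 \<le> real (k + 1)"
      "(real n)\<^sup>2 / 4 - real n / 2 - 7 / 4 \<le> real ((k + 1) * y + k)"
    using window_choice \<open>n \<ge> 2\<close> by blast
  have "c ^ (k + 1) * \<alpha> ^ ((k + 1) * y + k) \<le> of_int (Lcm (R ` {y + 2..n})) * of_int g ^ k"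
    using Lcm_window_lower_bound[OF sum prod, of k y] assms(1-6) \<open>\<beta> < 0\<close>
    unfolding c_eq g_def n by (simp add: coprime_iff_gcd_eq_1)
  also have "\<dots> \<le> of_int (Lcm (R ` {m..n})) * of_int g ^ k"
    using Lcm_le_Lcm_of_le[of m "y + 2" n] assms(1-4,13,14) start \<open>g > 0\<close>
    by (simp add: mult_right_mono)
  finally show ?thesis
    using powr_bound_of_power_bound[OF _ \<open>of_int g \<le> c\<close> \<open>\<alpha> \<ge> 1\<close> exps] \<open>g > 0\<close>
    by (simp add: c_def g_def)
qed

end
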